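(* Let $p>2$ be a prime and let $a,b\in\mathbb{C}_p$ with $a\neq0$, $b\neq0$, $a\neq b$ and $|2a|_p>|b|_p$. Let $P=-\frac1b$, $D=\mathbb{C}_p\setminus\{P\}$, $f(x)=\frac{ax^2}{bx+1}$ on $D$, $x_1=0$, $x_2=\frac1{a-b}$, and $r_1=\frac{1}{|a|_p}$. Then $x_1$ is an attracting fixed point and $x_2$ is an indifferent fixed point of $f$, and $$A(x_1)=B_{r_1}(x_1),\qquad SI(x_2)=B_{r_1}(x_2).$$
   Context: $\mathbb{C}_p$ is the field of complex $p$-adic numbers with $p$-adic norm $|\cdot|_p$. For $c\in\mathbb{C}_p$, $r>0$: $B_r(c)=\{x:|x-c|_p<r\}$, $S_r(c)=\{x:|x-c|_p=r\}$. For $y\in D$, $y^{(n)}=f^n(y)$ is the $n$-th iterate (defined as long as no earlier iterate equals $P$). A fixed point $x^{(0)}$ of $f$ is attracting if $|f'(x^{(0)})|_p<1$ and indifferent if $|f'(x^{(0)})|_p=1$. Its basin of attraction is $A(x^{(0)})=\{y: y^{(n)}\text{ defined for all }n,\ y^{(n)}\to x^{(0)}\}$. A ball $B_r(x^{(0)})$ contained in $D$ is a Siegel disk of $x^{(0)}$ if every sphere $S_\rho(x^{(0)})$ with $\rho<r$ is invariant, i.e. $x\in S_\rho(x^{(0)})$ implies $x^{(n)}\in S_\rho(x^{(0)})$ for all $n\ge1$; the maximal Siegel disk $SI(x^{(0)})$ is the union of all Siegel disks centered at $x^{(0)}$. *)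

theory Defs
  imports "HOL-Computational_Algebra.Polynomial"
begin

text \<open>C_p is modelled axiomatically: a field (of characteristic 0) together with an
absolute value N such that (field, N) is a complete, algebraically closed,
non-archimedean valued field with N p = 1/p in which the algebraic numbers are dense.
These properties characterise C_p up to isometric isomorphism.\<close>

definition is_Cp :: "nat \<Rightarrow> ('a::field_char_0 \<Rightarrow> real) \<Rightarrow> bool" where
  "is_Cp p N \<longleftrightarrow>
     (\<forall>x. N x \<ge> 0) \<and> (\<forall>x. N x = 0 \<longleftrightarrow> x = 0) \<and>
     (\<forall>x y. N (x * y) = N x * N y) \<and>
     (\<forall>x y. N (x + y) \<le> max (N x) (N y)) \<and>
     N (of_nat p) = 1 / real p \<and>
     (\<forall>X :: nat \<Rightarrow> 'a. (\<forall>e>0. \<exists>M. \<forall>m\<ge>M. \<forall>n\<ge>M. N (X m - X n) < e) \<longrightarrow>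
          (\<exists>L. \<forall>e>0. \<exists>M. \<forall>n\<ge>M. N (X n - L) < e)) \<and>
     (\<forall>q :: 'a poly. degree q > 0 \<longrightarrow> (\<exists>x. poly q x = 0)) \<and>
     (\<forall>x e. e > 0 \<longrightarrow> (\<exists>y. (\<exists>q :: int poly. q \<noteq> 0 \<and> poly (map_poly of_int q) y = 0)
                                 \<and> N (x - y) < e))"

definition pball :: "('a::ab_group_add \<Rightarrow> real) \<Rightarrow> 'a \<Rightarrow> real \<Rightarrow> 'a set" where
  "pball N c r = {x. N (x - c) < r}"

definition psphere :: "('a::ab_group_add \<Rightarrow> real) \<Rightarrow> 'a \<Rightarrow> real \<Rightarrow> 'a set" where
  "psphere N c r = {x. N (x - c) = r}"

definition has_pderiv :: "('a::field \<Rightarrow> real) \<Rightarrow> 'a set \<Rightarrow> ('a \<Rightarrow> 'a) \<Rightarrow> 'a \<Rightarrow> 'a \<Rightarrow> bool" where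
  "has_pderiv N D f x d \<longleftrightarrow>
     (\<forall>e>0. \<exists>\<delta>>0. \<forall>y\<in>D. 0 < N (y - x) \<and> N (y - x) < \<delta> \<longrightarrow>
        N ((f y - f x) / (y - x) - d) < e)"

definition fixed_pt :: "'a set \<Rightarrow> ('a \<Rightarrow> 'a) \<Rightarrow> 'a \<Rightarrow> bool" where
  "fixed_pt D f x \<longleftrightarrow> x \<in> D \<and> f x = x"

definition attracting_fp :: "('a::field \<Rightarrow> real) \<Rightarrow> 'a set \<Rightarrow> ('a \<Rightarrow> 'a) \<Rightarrow> 'a \<Rightarrow> bool" where
  "attracting_fp N D f x \<longleftrightarrow> fixed_pt D f x \<and> (\<exists>d. has_pderiv N D f x d \<and> N d < 1)"

definition indifferent_fp :: "('a::field \<Rightarrow> real) \<Rightarrow> 'a set \<Rightarrow> ('a \<Rightarrow> 'a) \<Rightarrow> 'a \<Rightarrow> bool" where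
  "indifferent_fp N D f x \<longleftrightarrow> fixed_pt D f x \<and> (\<exists>d. has_pderiv N D f x d \<and> N d = 1)"

definition basin :: "('a::ab_group_add \<Rightarrow> real) \<Rightarrow> 'a set \<Rightarrow> ('a \<Rightarrow> 'a) \<Rightarrow> 'a \<Rightarrow> 'a set" where
  "basin N D f x0 = {y. (\<forall>n. (f ^^ n) y \<in> D) \<and>
       (\<forall>e>0. \<exists>M. \<forall>n\<ge>M. N ((f ^^ n) y - x0) < e)}"

definition siegel_disk :: "('a::ab_group_add \<Rightarrow> real) \<Rightarrow> 'a set \<Rightarrow> ('a \<Rightarrow> 'a) \<Rightarrow> 'a \<Rightarrow> real \<Rightarrow> bool" where
  "siegel_disk N D f x0 r \<longleftrightarrow> r > 0 \<and> pball N x0 r \<subseteq> D \<and>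
     (\<forall>\<rho>. \<rho> < r \<longrightarrow> (\<forall>x \<in> psphere N x0 \<rho>. \<forall>n\<ge>1. (f ^^ n) x \<in> psphere N x0 \<rho>))"

definition max_siegel :: "('a::ab_group_add \<Rightarrow> real) \<Rightarrow> 'a set \<Rightarrow> ('a \<Rightarrow> 'a) \<Rightarrow> 'a \<Rightarrow> 'a set" where
  "max_siegel N D f x0 = \<Union> {pball N x0 r | r. siegel_disk N D f x0 r}"

end

theory Submission
  imports Defs
begin

text \<open>Since p is odd, |2| = 1, and the hypothesis becomes |b| < |a|. On the ball |x| < 1/|a| the
denominator b x + 1 is a unit, so |a| |f x| = (|a| |x|)^2 and the iterates converge to 0 doubly
exponentially; off this ball |b x + 1| \<le> |a| |x|, hence |f x| \<ge> |x|, so orbits never enter it.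
Around x2 = 1/(a - b) one has the factorisation
  f x - x2 = h (2a - b + a (a - b) h) / ((a - b)(b x + 1)),  h = x - x2,
and for |h| < 1/|a| both the second factor and the denominator have absolute value |a|, so f
preserves every sphere about x2 of radius below 1/|a|. On the sphere of radius 1/|a| the point
h = -(2a - b)/(a (a - b)) is mapped onto x2 itself, so no larger disk is a Siegel disk.\<close>

lemma has_pderivI_remainder:
  assumes "\<delta>\<^sub>0 > 0"
    and "\<And>y. y \<in> D \<Longrightarrow> 0 < N (y - x) \<Longrightarrow> N (y - x) < \<delta>\<^sub>0 \<Longrightarrow>
           N ((f y - f x) / (y - x) - d) \<le> C * N (y - x)"
  shows "has_pderiv N D f x d"
  unfolding has_pderiv_def
proof (intro allI impI)
  fix e :: real assume "e > 0"
  define \<delta> where "\<delta> = min \<delta>\<^sub>0 (e / (\<bar>C\<bar> + 1))"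
  have "N ((f y - f x) / (y - x) - d) < e"
    if "y \<in> D" "0 < N (y - x)" "N (y - x) < \<delta>" for y
  proof -
    have "N ((f y - f x) / (y - x) - d) \<le> C * N (y - x)"
      using assms(2)[OF that(1,2)] that(3) unfolding \<delta>_def by simp
    also have "\<dots> \<le> \<bar>C\<bar> * N (y - x)"
      using that(2) by (intro mult_right_mono) auto
    also have "\<dots> \<le> \<bar>C\<bar> * (e / (\<bar>C\<bar> + 1))"
      using that(3) unfolding \<delta>_def by (intro mult_left_mono) auto
    also have "\<dots> < e"
      using \<open>e > 0\<close> by (simp add: field_simps)
    finally show ?thesis .
  qed
  moreover have "\<delta> > 0" unfolding \<delta>_def using assms(1) \<open>e > 0\<close> by simp
  ultimately show "\<exists>\<delta>>0. \<forall>y\<in>D. 0 < N (y - x) \<and> N (y - x) < \<delta> \<longrightarrow>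
                     N ((f y - f x) / (y - x) - d) < e"
    by blast
qed

lemma mem_basinI:
  assumes "\<And>n. (f ^^ n) y \<in> D" and "(\<lambda>n. N ((f ^^ n) y - x\<^sub>0)) \<longlonglongrightarrow> 0"
  shows "y \<in> basin N D f x\<^sub>0"
  using assms unfolding basin_def LIMSEQ_iff by fastforce

lemma basin_eq_pball:
  assumes "r > 0" and "pball N x\<^sub>0 r \<subseteq> basin N D f x\<^sub>0"
    and "\<And>y. y \<in> D \<Longrightarrow> N (y - x\<^sub>0) \<ge> r \<Longrightarrow> N (f y - x\<^sub>0) \<ge> r"
  shows "basin N D f x\<^sub>0 = pball N x\<^sub>0 r"
proof
  show "basin N D f x\<^sub>0 \<subseteq> pball N x\<^sub>0 r"
  proof
    fix y assume y: "y \<in> basin N D f x\<^sub>0"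
    show "y \<in> pball N x\<^sub>0 r"
    proof (rule ccontr)
      assume "y \<notin> pball N x\<^sub>0 r"
      then have "N ((f ^^ n) y - x\<^sub>0) \<ge> r" for n
        using y assms(3) by (induction n) (auto simp: pball_def basin_def)
      moreover obtain M where "N ((f ^^ M) y - x\<^sub>0) < r"
        using y \<open>r > 0\<close> unfolding basin_def by blast
      ultimately show False by (meson not_le)
    qed
  qed
qed (fact assms(2))

lemma max_siegel_eq_pball:
  assumes "siegel_disk N D f x\<^sub>0 r"
    and "x \<in> psphere N x\<^sub>0 r" and "f x \<notin> psphere N x\<^sub>0 r"
  shows "max_siegel N D f x\<^sub>0 = pball N x\<^sub>0 r"
proof -
  have "r' \<le> r" if "siegel_disk N D f x\<^sub>0 r'" for r'
  proof (rule ccontr)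
    assume "\<not> r' \<le> r"
    then have "\<forall>z\<in>psphere N x\<^sub>0 r. \<forall>n\<ge>1. (f ^^ n) z \<in> psphere N x\<^sub>0 r"
      using that unfolding siegel_disk_def by auto
    then have "(f ^^ 1) x \<in> psphere N x\<^sub>0 r"
      using assms(2) by blast
    with assms(3) show False by simp
  qed
  then have "pball N x\<^sub>0 r' \<subseteq> pball N x\<^sub>0 r" if "siegel_disk N D f x\<^sub>0 r'" for r'
    using that unfolding pball_def by fastforce
  then show ?thesis
    using assms(1) unfolding max_siegel_def by blast
qed

locale nonarch_absval =
  fixes N :: "'a::field \<Rightarrow> real"
  assumes N_nonneg: "N x \<ge> 0"
    and N_eq_0_iff: "N x = 0 \<longleftrightarrow> x = 0"
    and N_mult: "N (x * y) = N x * N y"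
    and N_add_le_max: "N (x + y) \<le> max (N x) (N y)"
begin

lemma N_zero [simp]: "N 0 = 0"
  using N_eq_0_iff by simp

lemma N_pos_iff: "N x > 0 \<longleftrightarrow> x \<noteq> 0"
  using N_nonneg[of x] N_eq_0_iff[of x] by linarith

lemma N_one: "N 1 = 1"
  using N_mult[of 1 1] N_pos_iff[of 1] by simp

lemma N_minus: "N (- x) = N x"
proof -
  have "N (-1) ^ 2 = 1"
    using N_mult[of "-1" "-1"] N_one by (simp add: power2_eq_square)
  then have "N (-1) = 1"
    using N_nonneg[of "-1"] by (auto simp: power2_eq_1_iff)
  then show ?thesis using N_mult[of "-1" x] by simp
qed

lemma N_divide: "N (x / y) = N x / N y"
proof (cases "y = 0")
  case False
  then have "N (x / y) * N y = N x" using N_mult[of "x / y" y] by simp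
  with False show ?thesis using N_pos_iff[of y] by (simp add: field_simps)
qed simp

lemma N_power: "N (x ^ n) = N x ^ n"
  by (induction n) (simp_all add: N_one N_mult)

lemma N_add_eq_right:
  assumes "N x < N y" shows "N (x + y) = N y"
proof -
  have "N y \<le> max (N (x + y)) (N (- x))"
    using N_add_le_max[of "x + y" "- x"] by simp
  then show ?thesis
    using N_add_le_max[of x y] assms N_minus[of x] by (auto simp: max_def split: if_splits)
qed

lemma N_add_eq_left: "N y < N x \<Longrightarrow> N (x + y) = N x"
  using N_add_eq_right[of y x] by (simp add: add.commute)

lemma N_of_nat_le_one: "N (of_nat n) \<le> 1"
proof (induction n)
  case (Suc n)
  then show ?case using N_add_le_max[of 1 "of_nat n"] N_one by simp
qed simp

lemma N_two_eq_one:
  assumes "odd p" and "N (of_nat p) < 1"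
  shows "N 2 = 1"
proof (rule ccontr)
  assume "N 2 \<noteq> 1"
  then have "N 2 < 1" using N_of_nat_le_one[of 2] by simp
  obtain k where "p = 2 * k + 1" using \<open>odd p\<close> by (rule oddE)
  then have "1 = of_nat p + - (of_nat k * 2 :: 'a)" by simp
  then have "N 1 \<le> max (N (of_nat p)) (N (of_nat k * 2))"
    using N_add_le_max[of "of_nat p" "- (of_nat k * 2)"] N_minus by simp
  moreover have "N (of_nat k * 2) \<le> 1 * N 2"
    using mult_right_mono[OF N_of_nat_le_one[of k] N_nonneg[of 2]] by (simp add: N_mult)
  ultimately show False using assms(2) \<open>N 2 < 1\<close> N_one by simp
qed

end

lemma is_Cp_imp_nonarch_absval: "is_Cp p N \<Longrightarrow> nonarch_absval N"
  unfolding is_Cp_def nonarch_absval_def by blast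

locale quad_map = nonarch_absval N for N :: "'a::field \<Rightarrow> real" +
  fixes a b :: 'a
  assumes b_nonzero: "b \<noteq> 0" and N_b_less_N_a: "N b < N a" and N_two: "N 2 = 1"
begin

definition qmap :: "'a \<Rightarrow> 'a" where
  "qmap = (\<lambda>x. a * x ^ 2 / (b * x + 1))"

abbreviation D :: "'a set" where "D \<equiv> UNIV - {- 1 / b}"
abbreviation r\<^sub>1 :: real where "r\<^sub>1 \<equiv> 1 / N a"
abbreviation x\<^sub>2 :: 'a where "x\<^sub>2 \<equiv> 1 / (a - b)"

lemma N_a_pos: "N a > 0"
  using N_b_less_N_a N_nonneg[of b] by linarith

lemma a_nonzero: "a \<noteq> 0"
  using N_a_pos N_pos_iff by blast

lemma N_a_minus_b: "N (a - b) = N a"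
  using N_add_eq_left[of "- b" a] N_b_less_N_a N_minus[of b] by simp

lemma a_minus_b_nonzero: "a - b \<noteq> 0"
  using N_pos_iff[of "a - b"] N_a_minus_b N_a_pos by simp

lemma N_2a_minus_b: "N (2 * a - b) = N a"
  using N_add_eq_left[of "- b" "2 * a"] N_b_less_N_a N_minus[of b] by (simp add: N_mult N_two)

lemma mem_D_iff: "x \<in> D \<longleftrightarrow> b * x + 1 \<noteq> 0"
proof -
  have "x = - 1 / b \<longleftrightarrow> b * x = - 1"
    using b_nonzero by (auto simp: field_simps)
  also have "\<dots> \<longleftrightarrow> b * x + 1 = 0"
    by (rule eq_neg_iff_add_eq_0)
  finally show ?thesis by auto
qed

lemma N_denom_eq_one:
  assumes "N z < r\<^sub>1" shows "N (b * z + 1) = 1"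
proof -
  have "N (b * z) \<le> N a * N z"
    using N_b_less_N_a N_nonneg[of z] by (simp add: N_mult mult_right_mono)
  also have "\<dots> < N 1"
    using assms N_a_pos by (simp add: N_one field_simps)
  finally show ?thesis
    using N_add_eq_right[of "b * z" 1] N_one by simp
qed

lemma N_qmap_small:
  assumes "N z < r\<^sub>1" shows "N a * N (qmap z) = (N a * N z) ^ 2"
  using N_denom_eq_one[OF assms] by (simp add: qmap_def N_divide N_mult N_power power2_eq_square)

lemma N_iterate_less:
  assumes "N y < r\<^sub>1" shows "N ((qmap ^^ n) y) < r\<^sub>1"
proof (induction n)
  case (Suc n)
  let ?t = "N a * N ((qmap ^^ n) y)"
  have "0 \<le> ?t" "?t < 1"
    using Suc.IH N_a_pos N_nonneg by (simp_all add: field_simps)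
  then have "N a * N (qmap ((qmap ^^ n) y)) < 1"
    unfolding N_qmap_small[OF Suc.IH] by (simp add: power_less_one_iff)
  then show ?case using N_a_pos by (simp add: field_simps)
qed (use assms in simp)

lemma N_iterate_small:
  assumes "N y < r\<^sub>1" shows "N a * N ((qmap ^^ n) y) = (N a * N y) ^ 2 ^ n"
proof (induction n)
  case (Suc n)
  then show ?case
    using N_qmap_small[OF N_iterate_less[OF assms, of n]]
    by (simp add: power_mult[symmetric] mult.commute)
qed simp

lemma pball_subset_basin: "pball N 0 r\<^sub>1 \<subseteq> basin N D qmap 0"
proof
  fix y assume "y \<in> pball N 0 r\<^sub>1"
  then have y: "N y < r\<^sub>1" by (simp add: pball_def)
  define t where "t = N a * N y"
  have "\<bar>t\<bar> < 1"
    using y N_a_pos N_nonneg[of y] by (simp add: t_def field_simps)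
  then have "(\<lambda>n. t ^ n) \<longlonglongrightarrow> 0"
    using LIMSEQ_power_zero[of t] by simp
  moreover have "strict_mono (\<lambda>n::nat. 2 ^ n :: nat)"
    by (rule strict_monoI) simp
  ultimately have "(\<lambda>n. t ^ 2 ^ n) \<longlonglongrightarrow> 0"
    using LIMSEQ_subseq_LIMSEQ unfolding comp_def by blast
  then have "(\<lambda>n. t ^ 2 ^ n / N a) \<longlonglongrightarrow> 0"
    by (simp add: tendsto_divide_zero)
  moreover have "N ((qmap ^^ n) y) = t ^ 2 ^ n / N a" for n
    using N_iterate_small[OF y, of n] N_a_pos by (simp add: t_def field_simps)
  moreover have "(qmap ^^ n) y \<in> D" for n
    unfolding mem_D_iff using N_denom_eq_one[OF N_iterate_less[OF y, of n]] by auto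
  ultimately show "y \<in> basin N D qmap 0"
    by (intro mem_basinI) simp_all
qed

lemma N_qmap_large:
  assumes "z \<in> D" and "N z \<ge> r\<^sub>1" shows "N (qmap z) \<ge> r\<^sub>1"
proof -
  have z: "1 \<le> N a * N z"
    using assms(2) N_a_pos by (simp add: field_simps)
  have den: "0 < N (b * z + 1)"
    using assms(1) N_pos_iff mem_D_iff by blast
  have "N (b * z + 1) \<le> max (N b * N z) 1"
    using N_add_le_max[of "b * z" 1] by (simp add: N_mult N_one)
  also have "\<dots> \<le> N a * N z"
    using z N_b_less_N_a N_nonneg[of z] by (simp add: mult_right_mono)
  finally have den_le: "N (b * z + 1) \<le> N a * N z" .
  have "r\<^sub>1 \<le> N z" by (fact assms(2))
  also have "N z = N a * N z ^ 2 / (N a * N z)"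
    using N_a_pos by (simp add: power2_eq_square)
  also have "\<dots> \<le> N a * N z ^ 2 / N (b * z + 1)"
    using den den_le N_a_pos by (intro divide_left_mono) simp_all
  also have "\<dots> = N (qmap z)"
    by (simp add: qmap_def N_divide N_mult N_power)
  finally show ?thesis .
qed

lemma basin_zero: "basin N D qmap 0 = pball N 0 r\<^sub>1"
  using N_a_pos pball_subset_basin N_qmap_large by (intro basin_eq_pball) simp_all

lemma qmap_difference_quotient:
  assumes "b * x + 1 \<noteq> 0" and "b * y + 1 \<noteq> 0" and "y \<noteq> x"
  shows "(qmap y - qmap x) / (y - x) - a * (2 * x + b * x ^ 2) / (b * x + 1) ^ 2
       = a * (y - x) / ((b * x + 1) ^ 2 * (b * y + 1))"
  using assms by (simp add: qmap_def divide_simps) (simp add: algebra_simps power2_eq_square)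

lemma has_pderiv_qmap:
  assumes "b * x + 1 \<noteq> 0"
  shows "has_pderiv N S qmap x (a * (2 * x + b * x ^ 2) / (b * x + 1) ^ 2)"
proof -
  define c where "c = N (b * x + 1)"
  have c: "c > 0" using assms N_pos_iff by (simp add: c_def)
  have Nb: "N b > 0" using b_nonzero N_pos_iff by simp
  show ?thesis
  proof (rule has_pderivI_remainder[where \<delta>\<^sub>0 = "c / N b" and C = "N a / c ^ 3"])
    fix y assume y: "0 < N (y - x)" "N (y - x) < c / N b"
    have "N b * N (y - x) < c"
      using y(2) Nb by (simp add: pos_less_divide_eq mult.commute)
    then have "N (b * (y - x)) < N (b * x + 1)"
      unfolding N_mult c_def .
    then have "N (b * (y - x) + (b * x + 1)) = c"
      unfolding c_def by (rule N_add_eq_right)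
    then have cy: "N (b * y + 1) = c"
      by (simp add: algebra_simps)
    have y_ok: "b * y + 1 \<noteq> 0" "y \<noteq> x"
      using cy c y(1) by auto
    show "N ((qmap y - qmap x) / (y - x) - a * (2 * x + b * x ^ 2) / (b * x + 1) ^ 2)
             \<le> N a / c ^ 3 * N (y - x)"
      unfolding qmap_difference_quotient[OF assms y_ok] using cy
      by (simp add: N_divide N_mult N_power c_def[symmetric] power3_eq_cube power2_eq_square)
  qed (use c Nb in simp)
qed

lemma attracting_fp_zero: "attracting_fp N D qmap 0"
proof -
  have "has_pderiv N D qmap 0 0"
    using has_pderiv_qmap[of 0 D] by simp
  moreover have "0 \<in> D" and "qmap 0 = 0"
    unfolding mem_D_iff by (simp_all add: qmap_def)
  ultimately show ?thesis
    unfolding attracting_fp_def fixed_pt_def by force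
qed

lemma scaled_denom_eq: "(a - b) * (b * x + 1) = a + b * (a - b) * (x - x\<^sub>2)"
  using a_minus_b_nonzero by (simp add: field_simps)

lemma qmap_minus_x2:
  assumes "b * x + 1 \<noteq> 0"
  shows "qmap x - x\<^sub>2 = (x - x\<^sub>2) * (2 * a - b + a * (a - b) * (x - x\<^sub>2)) / ((a - b) * (b * x + 1))"
  using assms a_minus_b_nonzero
  by (simp add: qmap_def divide_simps) (simp add: algebra_simps power2_eq_square)

lemma N_denom_near_x2:
  assumes "N (x - x\<^sub>2) \<le> r\<^sub>1" shows "N ((a - b) * (b * x + 1)) = N a"
proof -
  have "N a * N (x - x\<^sub>2) \<le> 1"
    using assms N_a_pos by (simp add: field_simps)
  then have "N (b * (a - b) * (x - x\<^sub>2)) \<le> N b"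
    using N_nonneg[of b] by (simp add: N_mult N_a_minus_b mult.assoc mult_left_le)
  also have "\<dots> < N a"
    by (fact N_b_less_N_a)
  finally show ?thesis
    unfolding scaled_denom_eq by (rule N_add_eq_left)
qed

lemma denom_nonzero_near_x2: "N (x - x\<^sub>2) \<le> r\<^sub>1 \<Longrightarrow> b * x + 1 \<noteq> 0"
  using N_denom_near_x2 N_a_pos by force

lemma N_qmap_minus_x2:
  assumes "N (x - x\<^sub>2) < r\<^sub>1" shows "N (qmap x - x\<^sub>2) = N (x - x\<^sub>2)"
proof -
  have near: "N (x - x\<^sub>2) \<le> r\<^sub>1"
    using assms by simp
  have "N a * N (x - x\<^sub>2) < 1"
    using assms N_a_pos by (simp add: field_simps)
  then have "N (a * (a - b) * (x - x\<^sub>2)) < N (2 * a - b)"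
    unfolding N_mult N_a_minus_b N_2a_minus_b
    using mult_strict_left_mono[OF _ N_a_pos, of _ 1] by (simp add: mult.assoc)
  then have num: "N (2 * a - b + a * (a - b) * (x - x\<^sub>2)) = N a"
    using N_add_eq_left N_2a_minus_b by simp
  show ?thesis
    unfolding qmap_minus_x2[OF denom_nonzero_near_x2[OF near]] N_divide
      N_mult[of "x - x\<^sub>2"] num N_denom_near_x2[OF near]
    using N_a_pos by simp
qed

lemma denom_x2_nonzero: "b * x\<^sub>2 + 1 \<noteq> 0"
  by (rule denom_nonzero_near_x2) (use N_a_pos in simp)

lemma qmap_x2: "qmap x\<^sub>2 = x\<^sub>2"
  using qmap_minus_x2[OF denom_x2_nonzero] by simp

lemma qmap_escaping_point:
  defines "z \<equiv> x\<^sub>2 - (2 * a - b) / (a * (a - b))"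
  shows "z \<in> psphere N x\<^sub>2 r\<^sub>1" and "qmap z = x\<^sub>2"
proof -
  show "z \<in> psphere N x\<^sub>2 r\<^sub>1"
    using N_a_pos
    by (simp add: psphere_def z_def N_minus N_divide N_mult N_a_minus_b N_2a_minus_b power2_eq_square)
  then have "b * z + 1 \<noteq> 0"
    by (simp add: psphere_def denom_nonzero_near_x2)
  moreover have "2 * a - b + a * (a - b) * (z - x\<^sub>2) = 0"
    using a_nonzero a_minus_b_nonzero by (simp add: z_def)
  ultimately have "qmap z - x\<^sub>2 = 0"
    by (simp add: qmap_minus_x2)
  then show "qmap z = x\<^sub>2"
    by simp
qed

lemma siegel_disk_x2: "siegel_disk N D qmap x\<^sub>2 r\<^sub>1"
  unfolding siegel_disk_def
proof (intro conjI allI impI ballI subsetI)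
  fix x assume "x \<in> pball N x\<^sub>2 r\<^sub>1"
  then show "x \<in> D"
    unfolding mem_D_iff by (simp add: pball_def denom_nonzero_near_x2)
next
  fix \<rho> x and n :: nat assume "\<rho> < r\<^sub>1" and "x \<in> psphere N x\<^sub>2 \<rho>"
  then show "(qmap ^^ n) x \<in> psphere N x\<^sub>2 \<rho>"
    by (induction n) (auto simp: psphere_def N_qmap_minus_x2)
qed (use N_a_pos in simp)

lemma max_siegel_x2: "max_siegel N D qmap x\<^sub>2 = pball N x\<^sub>2 r\<^sub>1"
  using N_a_pos
  by (intro max_siegel_eq_pball[OF siegel_disk_x2 qmap_escaping_point(1)])
    (simp add: qmap_escaping_point(2) psphere_def)

lemma indifferent_fp_x2: "indifferent_fp N D qmap x\<^sub>2"
proof -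
  have "a * (2 * x\<^sub>2 + b * x\<^sub>2 ^ 2) / (b * x\<^sub>2 + 1) ^ 2 = (2 * a - b) / a"
    using a_nonzero a_minus_b_nonzero denom_x2_nonzero
    by (simp add: divide_simps) (simp add: algebra_simps power2_eq_square)
  then have "has_pderiv N D qmap x\<^sub>2 ((2 * a - b) / a)"
    using has_pderiv_qmap[OF denom_x2_nonzero] by simp
  moreover have "N ((2 * a - b) / a) = 1"
    using N_a_pos by (simp add: N_divide N_2a_minus_b)
  moreover have "x\<^sub>2 \<in> D"
    unfolding mem_D_iff by (fact denom_x2_nonzero)
  ultimately show ?thesis
    unfolding indifferent_fp_def fixed_pt_def using qmap_x2 by blast
qed

end

theorem theorem3p6:
  fixes p :: nat and N :: "'a::field_char_0 \<Rightarrow> real" and a b :: 'a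
  assumes "prime p" and "p > 2" and "is_Cp p N"
    and "a \<noteq> 0" and "b \<noteq> 0" and "a \<noteq> b" and "N (2 * a) > N b"
  defines "P \<equiv> - 1 / b"
  defines "D \<equiv> UNIV - {P}"
  defines "f \<equiv> (\<lambda>x. a * x ^ 2 / (b * x + 1))"
  defines "x1 \<equiv> 0"
  defines "x2 \<equiv> 1 / (a - b)"
  defines "r1 \<equiv> 1 / N a"
  shows "attracting_fp N D f x1 \<and> indifferent_fp N D f x2 \<and>
         basin N D f x1 = pball N x1 r1 \<and> max_siegel N D f x2 = pball N x2 r1"
proof -
  interpret nonarch_absval N
    using assms(3) by (rule is_Cp_imp_nonarch_absval)
  have "N (of_nat p) < 1"
    using assms(2,3) unfolding is_Cp_def by simp
  then have "N 2 = 1"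
    using N_two_eq_one prime_odd_nat assms(1,2) by blast
  then interpret quad_map N a b
    using assms(5,7) by unfold_locales (simp_all add: N_mult)
  have "f = qmap"
    unfolding f_def qmap_def ..
  then show ?thesis
    unfolding D_def P_def x1_def x2_def r1_def
    using attracting_fp_zero indifferent_fp_x2 basin_zero max_siegel_x2 by simp
qed

end
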